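(* Let $n\ge 1$ and let $\mathcal{E}$ be a probability distribution (ensemble) over $n$-qubit unitaries (quantum circuits) $C$ that is well-spread, i.e. there is a constant $\gamma$ (independent of $n$) such that $$\mathbb{E}_{C\sim\mathcal{E}}\big[\pi_C\big]\le \frac{\gamma}{2^n}.$$ For $\delta\in(0,1]$, let $P_\delta$ denote the probability that a circuit $C\sim\mathcal{E}$ is $\delta$-peaked. Then $$P_\delta = O\!\left(\frac{1}{\delta^{2}\,2^{n}}\right).$$
   Context: For an $n$-qubit unitary $C$, let $p_C[s]=|\langle s|C|0^n\rangle|^2$ for $s\in\{0,1\}^n$ be its output distribution when applied to $|0^n\rangle$ and measured in the computational basis. The collision probability of $C$ is $\pi_C:=\sum_{s\in\{0,1\}^n}p_C[s]^2$. Given $\delta\in(0,1]$, $C$ is called $\delta$-peaked if $\max_{s\in\{0,1\}^n}|\langle s|C|0^n\rangle|^2\ge\delta$. The constant implicit in the $O(\cdot)$ may depend on $\gamma$. *)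

theory Defs
  imports "HOL-Probability.Probability"
begin

text \<open>An n-qubit operator is represented by its matrix entries C s t, where the
computational basis states (bit strings in {0,1}^n) are identified with the indices
0..2^n-1 (binary encoding); the all-zero string 0^n is index 0.\<close>

definition unitary_on :: "nat \<Rightarrow> (nat \<Rightarrow> nat \<Rightarrow> complex) \<Rightarrow> bool" where
  "unitary_on n C \<longleftrightarrow>
     (\<forall>i<2^n. \<forall>j<2^n. (\<Sum>k<2^n. cnj (C k i) * C k j) = (if i = j then 1 else 0))"

definition out_prob :: "(nat \<Rightarrow> nat \<Rightarrow> complex) \<Rightarrow> nat \<Rightarrow> real" where
  "out_prob C s = (cmod (C s 0))^2"

definition collision_prob :: "nat \<Rightarrow> (nat \<Rightarrow> nat \<Rightarrow> complex) \<Rightarrow> real" where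
  "collision_prob n C = (\<Sum>s<2^n. (out_prob C s)^2)"

definition peaked :: "nat \<Rightarrow> real \<Rightarrow> (nat \<Rightarrow> nat \<Rightarrow> complex) \<Rightarrow> bool" where
  "peaked n \<delta> C \<longleftrightarrow> Max ((out_prob C) ` {..<2^n}) \<ge> \<delta>"

end

theory Submission
  imports Defs
begin

(* A delta-peaked circuit has some output probability at least delta, hence collision
   probability at least delta^2. Markov's inequality for the collision probability therefore
   bounds the probability of being delta-peaked by E[pi_C] / delta^2 <= gamma / (delta^2 2^n),
   so K = gamma works. *)

lemma out_prob_nonneg: "0 \<le> out_prob C s"
  by (simp add: out_prob_def)

lemma collision_prob_nonneg: "0 \<le> collision_prob n C"
  unfolding collision_prob_def by (intro sum_nonneg) simp

lemma sum_out_prob_eq_1: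
  assumes "unitary_on n C"
  shows "(\<Sum>s<2^n. out_prob C s) = 1"
proof -
  have "(\<Sum>k<(2::nat)^n. cnj (C k 0) * C k 0) = 1"
    using assms unfolding unitary_on_def by auto
  then have "complex_of_real (\<Sum>k<(2::nat)^n. (cmod (C k 0))^2) = 1"
    by (simp add: complex_norm_square mult.commute del: of_real_power)
  then show ?thesis
    unfolding out_prob_def using of_real_eq_1_iff by blast
qed

lemma collision_prob_le_1:
  assumes "unitary_on n C"
  shows "collision_prob n C \<le> 1"
proof -
  have "(out_prob C s)^2 \<le> out_prob C s" if "s < 2^n" for s
  proof -
    have "out_prob C s \<le> (\<Sum>s<2^n. out_prob C s)"
      using that by (intro member_le_sum) (auto simp: out_prob_nonneg)
    then have "out_prob C s \<le> 1"
      using sum_out_prob_eq_1[OF assms] by simp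
    then show ?thesis
      using out_prob_nonneg[of C s] by (simp add: power2_eq_square mult_left_le)
  qed
  then have "collision_prob n C \<le> (\<Sum>s<2^n. out_prob C s)"
    unfolding collision_prob_def by (intro sum_mono) auto
  then show ?thesis
    using sum_out_prob_eq_1[OF assms] by simp
qed

lemma peaked_imp_collision_prob_ge:
  assumes "peaked n \<delta> C" "0 < \<delta>"
  shows "\<delta>^2 \<le> collision_prob n C"
proof -
  have "Max ((out_prob C) ` {..<2^n}) \<in> (out_prob C) ` {..<2^n}"
    by (rule Max_in) (auto simp: lessThan_empty_iff)
  then obtain s where s: "s < 2^n" "Max ((out_prob C) ` {..<2^n}) = out_prob C s"
    by auto
  then have "\<delta>^2 \<le> (out_prob C s)^2"
    using assms unfolding peaked_def by (intro power_mono) auto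
  also have "\<dots> \<le> collision_prob n C"
    unfolding collision_prob_def using s(1) by (intro member_le_sum) auto
  finally show ?thesis .
qed

lemma borel_measurable_collision_prob:
  assumes "\<And>s. (\<lambda>C. C s 0) \<in> borel_measurable M"
  shows "(\<lambda>C. collision_prob n C) \<in> borel_measurable M"
  unfolding collision_prob_def out_prob_def using assms by measurable

lemma prob_peaked_le_expected_collision_prob:
  fixes M :: "(nat \<Rightarrow> nat \<Rightarrow> complex) measure"
  assumes "prob_space M"
    and measurable: "\<And>s. (\<lambda>C. C s 0) \<in> borel_measurable M"
    and unitary: "AE C in M. unitary_on n C"
    and "0 < \<delta>"
  shows "measure M {C \<in> space M. peaked n \<delta> C} \<le> (\<integral>C. collision_prob n C \<partial>M) / \<delta>^2"
proof -
  interpret prob_space M by fact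
  note collision_measurable = borel_measurable_collision_prob[OF measurable]
  have "AE C in M. norm (collision_prob n C) \<le> norm ((\<lambda>_. 1::real) C)"
    using unitary by eventually_elim (simp add: collision_prob_nonneg collision_prob_le_1)
  then have integrable: "integrable M (\<lambda>C. collision_prob n C)"
    by (rule Bochner_Integration.integrable_bound[OF integrable_const collision_measurable])
  have "{C \<in> space M. peaked n \<delta> C} \<subseteq> {C \<in> space M. \<delta>^2 \<le> collision_prob n C}"
    using peaked_imp_collision_prob_ge[OF _ \<open>0 < \<delta>\<close>] by auto
  moreover have "{C \<in> space M. \<delta>^2 \<le> collision_prob n C} \<in> sets M"
    using collision_measurable by measurable
  ultimately have "prob {C \<in> space M. peaked n \<delta> C} \<le> prob {C \<in> space M. \<delta>^2 \<le> collision_prob n C}"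
    by (rule finite_measure_mono)
  also have "\<dots> \<le> (\<integral>C. collision_prob n C \<partial>M) / \<delta>^2"
    by (rule integral_Markov_inequality_measure[OF integrable sets.top])
      (use \<open>0 < \<delta>\<close> in \<open>simp_all add: collision_prob_nonneg\<close>)
  finally show ?thesis .
qed

theorem theorem1:
  fixes \<gamma> :: real
  shows "\<exists>K::real. \<forall>(n::nat) (M::(nat \<Rightarrow> nat \<Rightarrow> complex) measure) (\<delta>::real).
     n \<ge> 1 \<longrightarrow> prob_space M \<longrightarrow>
     (\<forall>i j. (\<lambda>C. C i j) \<in> borel_measurable M) \<longrightarrow>
     (AE C in M. unitary_on n C) \<longrightarrow>
     (\<integral>C. collision_prob n C \<partial>M) \<le> \<gamma> / 2^n \<longrightarrow>
     0 < \<delta> \<longrightarrow> \<delta> \<le> 1 \<longrightarrow>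
     measure M {C \<in> space M. peaked n \<delta> C} \<le> K / (\<delta>^2 * 2^n)"
proof (intro exI[where x = \<gamma>] allI impI)
  fix n :: nat and M :: "(nat \<Rightarrow> nat \<Rightarrow> complex) measure" and \<delta> :: real
  assume "prob_space M" and "\<forall>i j. (\<lambda>C. C i j) \<in> borel_measurable M"
    and "AE C in M. unitary_on n C"
    and well_spread: "(\<integral>C. collision_prob n C \<partial>M) \<le> \<gamma> / 2^n"
    and "0 < \<delta>"
  then have "measure M {C \<in> space M. peaked n \<delta> C} \<le> (\<integral>C. collision_prob n C \<partial>M) / \<delta>^2"
    by (intro prob_peaked_le_expected_collision_prob) auto
  also have "\<dots> \<le> (\<gamma> / 2^n) / \<delta>^2"
    using well_spread \<open>0 < \<delta>\<close> by (intro divide_right_mono) auto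
  also have "\<dots> = \<gamma> / (\<delta>^2 * 2^n)"
    by (simp add: field_simps)
  finally show "measure M {C \<in> space M. peaked n \<delta> C} \<le> \<gamma> / (\<delta>^2 * 2^n)" .
qed

end
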